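(* For every positive integer $a$, $\Gamma(a,2a)=1$; for every integer $a\ge 2$, $\Gamma(a,2a-1)=2$.
   Context: For relatively prime positive integers $p,q$, exactly one of the equations $px+qy=\frac{(p-1)(q-1)}{2}$ (Equation 1) and $px+qy+1=\frac{(p-1)(q-1)}{2}$ (Equation 2) has a solution in nonnegative integers $(x,y)$. For positive integers $a,b$ with $d=\gcd(a,b)$, $\Gamma(a,b)=1$ if Equation 1 with $(p,q)=(a/d,b/d)$ has a nonnegative integer solution, and $\Gamma(a,b)=2$ otherwise. *)

theory Defs
  imports Main
begin

text \<open>For coprime p, q not both even, (p-1)(q-1) is even, so natural division is exact.\<close>

definition Gamma :: "nat \<Rightarrow> nat \<Rightarrow> nat" where
  "Gamma a b = (let d = gcd a b; p = a div d; q = b div d in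
     if (\<exists>x y :: nat. p * x + q * y = (p - 1) * (q - 1) div 2) then 1 else 2)"

end

theory Submission
  imports Defs
begin

lemma Gamma_coprime:
  assumes "coprime p q"
  shows "Gamma p q = (if \<exists>x y :: nat. p * x + q * y = (p - 1) * (q - 1) div 2 then 1 else 2)"
  using assms by (simp add: Gamma_def coprime_iff_gcd_eq_1)

text \<open>If a divides b then p = a/d is 1 (or a = b = 0), so the right-hand side is 0.\<close>

lemma Gamma_dvd:
  assumes "a dvd b"
  shows "Gamma a b = 1"
proof (cases "a = 0")
  case False
  then have "gcd a b = a" and "a div a = 1"
    using assms by (simp_all add: gcd_nat.absorb1)
  then show ?thesis by (simp add: Gamma_def)
qed (use assms in \<open>simp add: Gamma_def\<close>)

lemma coprime_self_double_minus_one: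
  fixes a :: nat
  assumes "a \<ge> 1"
  shows "coprime a (2 * a - 1)"
proof -
  have "coprime (2 * a) (2 * a - 1)"
    using assms by (intro coprime_diff_one_right_nat) simp
  then show ?thesis by simp
qed

text \<open>Reducing modulo a gives y \<equiv> -1, so y \<ge> a - 1, which already makes the
  y-term larger than the right-hand side.\<close>

lemma no_solution_self_double_minus_one:
  fixes a x y :: nat
  assumes "a \<ge> 2"
  shows "a * x + (2 * a - 1) * y \<noteq> (a - 1) * (a - 1)"
proof
  assume eq: "a * x + (2 * a - 1) * y = (a - 1) * (a - 1)"
  have "int (a * x + (2 * a - 1) * y) = int ((a - 1) * (a - 1))"
    using eq by simp
  then have "int a * int x + (2 * int a - 1) * int y = (int a - 1) * (int a - 1)"
    using assms by (simp add: of_nat_diff)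
  then have "int y + 1 = int a * (int x + 2 * int y - int a + 2)"
    by (simp add: algebra_simps)
  then have "int a dvd int y + 1" by (rule dvdI)
  then have "a dvd y + 1" by (metis int_dvd_int_iff of_nat_1 of_nat_add)
  then have "a \<le> y + 1" by (simp add: dvd_imp_le)
  then have "(2 * a - 1) * (a - 1) \<le> (2 * a - 1) * y" by (intro mult_le_mono2) simp
  moreover have "(a - 1) * (a - 1) < (2 * a - 1) * (a - 1)"
    using assms by simp
  ultimately show False using eq by linarith
qed

theorem corollary2p1:
  shows "(\<forall>a::nat. a \<ge> 1 \<longrightarrow> Gamma a (2 * a) = 1) \<and>
         (\<forall>a::nat. a \<ge> 2 \<longrightarrow> Gamma a (2 * a - 1) = 2)"
proof (intro conjI allI impI)
  fix a :: nat
  show "Gamma a (2 * a) = 1" by (simp add: Gamma_dvd)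
next
  fix a :: nat
  assume "a \<ge> 2"
  have "(a - 1) * (2 * a - 1 - 1) div 2 = (a - 1) * (a - 1)"
    by (simp add: right_diff_distrib')
  then have "\<nexists>x y. a * x + (2 * a - 1) * y = (a - 1) * (2 * a - 1 - 1) div 2"
    using no_solution_self_double_minus_one[OF \<open>a \<ge> 2\<close>] by auto
  moreover have "coprime a (2 * a - 1)"
    using \<open>a \<ge> 2\<close> by (intro coprime_self_double_minus_one) simp
  ultimately show "Gamma a (2 * a - 1) = 2"
    by (simp only: Gamma_coprime if_False)
qed

end
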